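(* Let $R$ and $S$ be transverse étale equivalence relations on a compact, metrizable, zero-dimensional space $X$. Then the equivalence relation $R\vee S$ on $X$ generated by $R$ and $S$ equals $(r\times s)(R\times_XS)$ and also equals $(r\times s)(S\times_XR)$, and the maps $r\times s:R\times_XS\to R\vee S$ and $r\times s:S\times_XR\to R\vee S$ are bijections.
   Context: An étale equivalence relation on $X$ is a countable equivalence relation $R\subset X\times X$ with a locally compact, Hausdorff, second countable topology in which the product $(x,y)\cdot(y,z)=(x,z)$ of composable pairs is continuous, the inverse is a homeomorphism, and the range map $r(x,y)=x$ is a local homeomorphism. For equivalence relations $R,S$ on $X$, $R\times_XS=\{((x,y),(y,z)):(x,y)\in R,(y,z)\in S\}$ with the relative topology from $R\times S$, and $r((x,y),(y,z))=x$, $s((x,y),(y,z))=z$, $(r\times s)((x,y),(y,z))=(x,z)$. $R$ and $S$ are transverse if $R\cap S=\Delta_X=\{(x,x):x\in X\}$ and there is a homeomorphism $h:R\times_XS\to S\times_XR$ with $r\circ h=r$ and $s\circ h=s$. *)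

theory Defs
  imports "HOL-Analysis.Analysis"
begin

definition fib_prod :: "('a \<times> 'a) set \<Rightarrow> ('a \<times> 'a) set \<Rightarrow> (('a \<times> 'a) \<times> ('a \<times> 'a)) set" where
  "fib_prod R S = {(p, q). p \<in> R \<and> q \<in> S \<and> snd p = fst q}"

definition fib_top :: "('a \<times> 'a) topology \<Rightarrow> ('a \<times> 'a) topology \<Rightarrow> (('a \<times> 'a) \<times> ('a \<times> 'a)) topology" where
  "fib_top TR TS = subtopology (prod_topology TR TS) (fib_prod (topspace TR) (topspace TS))"

definition fr :: "(('a \<times> 'a) \<times> ('a \<times> 'a)) \<Rightarrow> 'a" where "fr a = fst (fst a)"
definition fs :: "(('a \<times> 'a) \<times> ('a \<times> 'a)) \<Rightarrow> 'a" where "fs a = snd (snd a)"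
definition rs :: "(('a \<times> 'a) \<times> ('a \<times> 'a)) \<Rightarrow> 'a \<times> 'a" where "rs a = (fr a, fs a)"

definition local_homeomorphism_map :: "'b topology \<Rightarrow> 'c topology \<Rightarrow> ('b \<Rightarrow> 'c) \<Rightarrow> bool" where
  "local_homeomorphism_map T U f \<longleftrightarrow>
     (\<forall>p \<in> topspace T. \<exists>V. openin T V \<and> p \<in> V \<and> openin U (f ` V) \<and>
        homeomorphic_map (subtopology T V) (subtopology U (f ` V)) f)"

text \<open>R (with its own topology TR, whose underlying set is R) is an etale
  equivalence relation on the space TX.\<close>
definition etale_equiv_rel :: "'a topology \<Rightarrow> ('a \<times> 'a) topology \<Rightarrow> bool" where
  "etale_equiv_rel TX TR \<longleftrightarrow>
     equiv (topspace TX) (topspace TR) \<and>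
     (\<forall>x \<in> topspace TX. countable {y. (x, y) \<in> topspace TR}) \<and>
     locally_compact_space TR \<and> Hausdorff_space TR \<and> second_countable TR \<and>
     continuous_map (fib_top TR TR) TR rs \<and>
     homeomorphic_map TR TR (\<lambda>(x, y). (y, x)) \<and>
     local_homeomorphism_map TR TX fst"

definition transverse :: "'a topology \<Rightarrow> ('a \<times> 'a) topology \<Rightarrow> ('a \<times> 'a) topology \<Rightarrow> bool" where
  "transverse TX TR TS \<longleftrightarrow>
     topspace TR \<inter> topspace TS = Id_on (topspace TX) \<and>
     (\<exists>h. homeomorphic_map (fib_top TR TS) (fib_top TS TR) h \<and>
          (\<forall>a \<in> fib_prod (topspace TR) (topspace TS). fr (h a) = fr a \<and> fs (h a) = fs a))"

definition equiv_join :: "'a set \<Rightarrow> ('a \<times> 'a) set \<Rightarrow> ('a \<times> 'a) set \<Rightarrow> ('a \<times> 'a) set" where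
  "equiv_join X R S = \<Inter>{E. equiv X E \<and> R \<subseteq> E \<and> S \<subseteq> E}"

end

theory Submission
  imports Defs
begin

text \<open>The homeomorphism witnessing transversality preserves r and s, so r \<times> s has the same
  image on R \<times>_X S and on S \<times>_X R; these images are R O S and S O R, which therefore
  coincide. Two commuting equivalence relations compose to an equivalence relation, necessarily
  the one they generate. Injectivity of r \<times> s: two middle points y, y' of a triple x R y S z
  satisfy y R y' and y S y', so y = y' because R \<inter> S is the diagonal.\<close>

lemma rs_image_fib_prod: "rs ` fib_prod A B = A O B"
  unfolding fib_prod_def rs_def fr_def fs_def by (force simp: relcomp.simps)

lemma topspace_fib_top: "topspace (fib_top TR TS) = fib_prod (topspace TR) (topspace TS)"
  unfolding fib_top_def fib_prod_def by auto

lemma etale_equiv_rel_imp_equiv: "etale_equiv_rel TX TR \<Longrightarrow> equiv (topspace TX) (topspace TR)"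
  unfolding etale_equiv_rel_def by blast

lemma inj_on_rs_fib_prod:
  assumes "equiv X A" "equiv X B" "A \<inter> B = Id_on X"
  shows "inj_on rs (fib_prod A B)"
proof (rule inj_onI)
  fix p q assume "p \<in> fib_prod A B" "q \<in> fib_prod A B" and eq: "rs p = rs q"
  then obtain x y z x' y' z' where p: "p = ((x, y), (y, z))" "(x, y) \<in> A" "(y, z) \<in> B"
    and q: "q = ((x', y'), (y', z'))" "(x', y') \<in> A" "(y', z') \<in> B"
    unfolding fib_prod_def by auto
  have ends: "x' = x" "z' = z" using eq p q by (simp_all add: rs_def fr_def fs_def)
  have "(y, y') \<in> A" using p q ends assms(1) unfolding equiv_def by (metis symD transD)
  moreover have "(y, y') \<in> B" using p q ends assms(2) unfolding equiv_def by (metis symD transD)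
  ultimately have "(y, y') \<in> Id_on X" using assms(3) by blast
  then have "y = y'" by (auto simp: Id_on_def)
  then show "p = q" using p q ends by simp
qed

lemma transverse_relcomp_commute:
  assumes "transverse TX TR TS"
  shows "topspace TS O topspace TR = topspace TR O topspace TS"
proof -
  obtain h where hom: "homeomorphic_map (fib_top TR TS) (fib_top TS TR) h"
    and h_rs: "\<forall>a \<in> fib_prod (topspace TR) (topspace TS). fr (h a) = fr a \<and> fs (h a) = fs a"
    using assms unfolding transverse_def by blast
  have "h ` fib_prod (topspace TR) (topspace TS) = fib_prod (topspace TS) (topspace TR)"
    using homeomorphic_imp_surjective_map[OF hom] by (simp add: topspace_fib_top)
  then have "rs ` fib_prod (topspace TS) (topspace TR) = (rs \<circ> h) ` fib_prod (topspace TR) (topspace TS)"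
    by (metis image_comp)
  also have "\<dots> = rs ` fib_prod (topspace TR) (topspace TS)"
    by (rule image_cong) (use h_rs in \<open>auto simp: rs_def\<close>)
  finally show ?thesis by (simp add: rs_image_fib_prod)
qed

lemma equiv_relcomp_if_commute:
  assumes R: "equiv X R" and S: "equiv X S" and comm: "S O R = R O S"
  shows "equiv X (R O S)"
proof (rule equivI)
  show "refl_on X (R O S)"
    using R S unfolding equiv_def refl_on_def by blast
  show "sym (R O S)"
  proof (rule symI)
    fix a b assume "(a, b) \<in> R O S"
    then have "(b, a) \<in> S O R" using R S unfolding equiv_def by (auto dest: symD)
    then show "(b, a) \<in> R O S" using comm by simp
  qed
  show "trans (R O S)"
  proof (rule transI)
    fix a b c assume "(a, b) \<in> R O S" "(b, c) \<in> R O S"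
    then obtain u v where au: "(a, u) \<in> R" and "(u, b) \<in> S" "(b, v) \<in> R" and vc: "(v, c) \<in> S"
      by blast
    then have "(u, v) \<in> R O S" using comm by blast
    then obtain w where "(u, w) \<in> R" "(w, v) \<in> S" by blast
    then have "(a, w) \<in> R" "(w, c) \<in> S"
      using au vc R S unfolding equiv_def by (meson transD)+
    then show "(a, c) \<in> R O S" by blast
  qed
  show "R O S \<subseteq> X \<times> X"
    using R S unfolding equiv_def refl_on_def by blast
qed

lemma equiv_join_eq_relcomp:
  assumes R: "equiv X R" and S: "equiv X S" and comm: "S O R = R O S"
  shows "equiv_join X R S = R O S"
proof
  have "R \<subseteq> R O S" "S \<subseteq> R O S"
    using R S unfolding equiv_def refl_on_def by blast+
  then show "equiv_join X R S \<subseteq> R O S"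
    unfolding equiv_join_def using equiv_relcomp_if_commute[OF assms] by blast
  show "R O S \<subseteq> equiv_join X R S"
    unfolding equiv_join_def equiv_def by (auto dest: transD)
qed

theorem lemma3p2:
  fixes TX :: "'a topology" and TR TS :: "('a \<times> 'a) topology"
  assumes "compact_space TX" and "metrizable_space TX" and "TX dim_le 0"
    and "etale_equiv_rel TX TR" and "etale_equiv_rel TX TS"
    and "transverse TX TR TS"
  shows "equiv_join (topspace TX) (topspace TR) (topspace TS) = rs ` fib_prod (topspace TR) (topspace TS)
    \<and> equiv_join (topspace TX) (topspace TR) (topspace TS) = rs ` fib_prod (topspace TS) (topspace TR)
    \<and> bij_betw rs (fib_prod (topspace TR) (topspace TS)) (equiv_join (topspace TX) (topspace TR) (topspace TS))
    \<and> bij_betw rs (fib_prod (topspace TS) (topspace TR)) (equiv_join (topspace TX) (topspace TR) (topspace TS))"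
proof -
  have R: "equiv (topspace TX) (topspace TR)" and S: "equiv (topspace TX) (topspace TS)"
    using assms(4,5) by (simp_all add: etale_equiv_rel_imp_equiv)
  have diag: "topspace TR \<inter> topspace TS = Id_on (topspace TX)"
    using assms(6) unfolding transverse_def by blast
  have comm: "topspace TS O topspace TR = topspace TR O topspace TS"
    using assms(6) by (rule transverse_relcomp_commute)
  have "inj_on rs (fib_prod (topspace TR) (topspace TS))"
    using R S diag by (rule inj_on_rs_fib_prod)
  moreover have "inj_on rs (fib_prod (topspace TS) (topspace TR))"
    using S R diag by (intro inj_on_rs_fib_prod) auto
  ultimately show ?thesis
    using equiv_join_eq_relcomp[OF R S comm] comm by (simp add: rs_image_fib_prod bij_betw_def)
qed

end
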